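(* The cut rule is admissible: every sequent derivable using the rules (id), ($\land$), ($\lor$), ($\Box$), ($\Diamond$) and (cut) is derivable using only (id), ($\land$), ($\lor$), ($\Box$), ($\Diamond$).
   Context: Fix a countable set of atoms; each atom $\alpha$ has a dual negative atom $\alpha^\perp$. Formulas: $A,B ::= \alpha \mid \alpha^\perp \mid A\land B \mid A\lor B \mid \Box A \mid \Diamond A$. Negation $A^\perp$: $(\alpha)^\perp=\alpha^\perp$, $(\alpha^\perp)^\perp=\alpha$, $(A\land B)^\perp=A^\perp\lor B^\perp$, $(A\lor B)^\perp=A^\perp\land B^\perp$, $(\Box A)^\perp=\Diamond A^\perp$, $(\Diamond A)^\perp=\Box A^\perp$. A (nested) sequent is given by $\Gamma,\Delta ::= \cdot \mid \Gamma, A \mid \Gamma, [\Delta]$, where $\cdot$ is the empty sequent; sequents are taken up to exchange, and $\Gamma,\Delta$ denotes juxtaposition. A unary context is given by $\Gamma\{-\} ::= \Delta,\{-\} \mid \Delta,[\Gamma\{-\}]$; $\Gamma\{\Delta\}$ is the result of filling the hole with $\Delta$, and $\Gamma\{\}$ means $\Gamma\{\cdot\}$. Depth: $\mathrm{depth}(\Delta,\{-\})=0$, $\mathrm{depth}(\Delta,[\Gamma\{-\}])=\mathrm{depth}(\Gamma\{-\})+1$. Rules: (id) $\Gamma\{\alpha^\perp,\alpha\}$ with no premises ($\alpha$ an atom); ($\land$) from $\Gamma\{A\}$ and $\Gamma\{B\}$ infer $\Gamma\{A\land B\}$; ($\lor$) from $\Gamma\{A,B\}$ infer $\Gamma\{A\lor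 B\}$; ($\Box$) from $\Gamma\{[\Diamond A^\perp, A]\}$ infer $\Gamma\{\Box A\}$; ($\Diamond$) from $\Gamma\{\Delta\{A\},\Diamond A\}$ infer $\Gamma\{\Delta\{\},\Diamond A\}$, provided $\mathrm{depth}(\Delta\{-\})>0$; (cut) from $\Gamma\{A\}$ and $\Gamma\{A^\perp\}$ infer $\Gamma\{\}$. *)

theory Defs
  imports "HOL-Library.Multiset"
begin

datatype fm = Atm nat | NAtm nat | And fm fm | Or fm fm | Box fm | Dia fm

primrec neg :: "fm \<Rightarrow> fm" where
  "neg (Atm a) = NAtm a"
| "neg (NAtm a) = Atm a"
| "neg (And A B) = Or (neg A) (neg B)"
| "neg (Or A B) = And (neg A) (neg B)"
| "neg (Box A) = Dia (neg A)"
| "neg (Dia A) = Box (neg A)"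

(* A nested sequent is a multiset (sequents are taken up to exchange) of items,
   each item being a formula or a bracketed nested sequent [Delta]. *)
datatype item = F fm | Br "item multiset"

type_synonym sequent = "item multiset"

(* Unary contexts: Delta,{-}  |  Delta,[Gamma{-}] *)
datatype ctx = Hole sequent | Nest sequent ctx

primrec fill :: "ctx \<Rightarrow> sequent \<Rightarrow> sequent" where
  "fill (Hole D) X = D + X"
| "fill (Nest D G) X = D + {# Br (fill G X) #}"

primrec depth :: "ctx \<Rightarrow> nat" where
  "depth (Hole D) = 0"
| "depth (Nest D G) = Suc (depth G)"

inductive deriv :: "bool \<Rightarrow> sequent \<Rightarrow> bool" for c :: bool where
  idR:  "deriv c (fill G {# F (NAtm a), F (Atm a) #})"
| andR: "deriv c (fill G {# F A #}) \<Longrightarrow> deriv c (fill G {# F B #})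
          \<Longrightarrow> deriv c (fill G {# F (And A B) #})"
| orR:  "deriv c (fill G {# F A, F B #}) \<Longrightarrow> deriv c (fill G {# F (Or A B) #})"
| boxR: "deriv c (fill G {# Br {# F (Dia (neg A)), F A #} #})
          \<Longrightarrow> deriv c (fill G {# F (Box A) #})"
| diaR: "depth D > 0 \<Longrightarrow> deriv c (fill G (fill D {# F A #} + {# F (Dia A) #}))
          \<Longrightarrow> deriv c (fill G (fill D {#} + {# F (Dia A) #}))"
| cutR: "c \<Longrightarrow> deriv c (fill G {# F A #}) \<Longrightarrow> deriv c (fill G {# F (neg A) #})
          \<Longrightarrow> deriv c (fill G {#})"

abbreviation derivable_with_cut :: "sequent \<Rightarrow> bool" where
  "derivable_with_cut \<Gamma> \<equiv> deriv True \<Gamma>"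

abbreviation derivable_cut_free :: "sequent \<Rightarrow> bool" where
  "derivable_cut_free \<Gamma> \<equiv> deriv False \<Gamma>"

end

theory Submission
  imports Defs
begin

text \<open>Cut admissibility is proved semantically. Derivations with cut are sound for transitive,
  conversely well-founded (GL) frames. Conversely, cut-free backward proof search on an
  underivable sequent reaches a saturated underivable sequent, and its tree of nodes, each seeing
  its strict descendants, is a GL countermodel. Search terminates because it only adds formulas of
  the finite closure of the input under subformulas and negation, and it creates a child only for
  a box formula not yet blocked on its branch; this bounds both depth and branching.\<close>

section \<open>Soundness over transitive conversely well-founded frames\<close>

primrec sat :: "('w \<Rightarrow> 'w \<Rightarrow> bool) \<Rightarrow> ('w \<Rightarrow> nat \<Rightarrow> bool) \<Rightarrow> 'w \<Rightarrow> fm \<Rightarrow> bool" where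
  "sat R V w (Atm a) = V w a"
| "sat R V w (NAtm a) = (\<not> V w a)"
| "sat R V w (And A B) = (sat R V w A \<and> sat R V w B)"
| "sat R V w (Or A B) = (sat R V w A \<or> sat R V w B)"
| "sat R V w (Box A) = (\<forall>v. R w v \<longrightarrow> sat R V v A)"
| "sat R V w (Dia A) = (\<exists>v. R w v \<and> sat R V v A)"

lemma sat_neg [simp]: "sat R V w (neg A) \<longleftrightarrow> \<not> sat R V w A"
  by (induction A arbitrary: w) auto

lemma neg_neg [simp]: "neg (neg A) = A"
  by (induction A) auto

inductive falsifies :: "('w \<Rightarrow> 'w \<Rightarrow> bool) \<Rightarrow> ('w \<Rightarrow> nat \<Rightarrow> bool) \<Rightarrow> 'w \<Rightarrow> sequent \<Rightarrow> bool"
  for R V where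
  "(\<forall>A. F A \<in># G \<longrightarrow> \<not> sat R V w A) \<Longrightarrow> (\<forall>D. Br D \<in># G \<longrightarrow> (\<exists>v. R w v \<and> falsifies R V v D))
   \<Longrightarrow> falsifies R V w G"

lemma falsifies_union [simp]:
  "falsifies R V w (G + H) \<longleftrightarrow> falsifies R V w G \<and> falsifies R V w H"
  by (auto elim!: falsifies.cases intro!: falsifies.intros)

lemma falsifies_empty [simp]: "falsifies R V w {#}"
  by (auto intro!: falsifies.intros)

lemma falsifies_add_F [simp]:
  "falsifies R V w (add_mset (F A) G) \<longleftrightarrow> \<not> sat R V w A \<and> falsifies R V w G"
  by (auto elim!: falsifies.cases intro!: falsifies.intros)

lemma falsifies_add_Br [simp]:
  "falsifies R V w (add_mset (Br D) G) \<longleftrightarrow> (\<exists>v. R w v \<and> falsifies R V v D) \<and> falsifies R V w G"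
  by (auto elim!: falsifies.cases intro!: falsifies.intros)

definition GL_frame :: "('w \<Rightarrow> 'w \<Rightarrow> bool) \<Rightarrow> bool" where
  "GL_frame R \<longleftrightarrow> transp R \<and> wf {(y, x). R x y}"

lemma falsifies_fill_focus:
  assumes "transp R" and "falsifies R V w (fill G X)"
  obtains u where "falsifies R V u X" and "\<And>Y. falsifies R V u Y \<Longrightarrow> falsifies R V w (fill G Y)"
    and "depth G = 0 \<Longrightarrow> u = w" and "0 < depth G \<Longrightarrow> R w u"
  using assms(2)
proof (induction G arbitrary: w thesis)
  case (Hole D)
  then show ?case by auto
next
  case (Nest D G)
  then obtain v where v: "R w v" "falsifies R V v (fill G X)" "falsifies R V w D" by auto
  obtain u where u: "falsifies R V u X" "\<And>Y. falsifies R V u Y \<Longrightarrow> falsifies R V v (fill G Y)"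
    "depth G = 0 \<Longrightarrow> u = v" "0 < depth G \<Longrightarrow> R v u"
    using Nest.IH[OF _ v(2)] by blast
  have "R w u"
    using u(3,4) v(1) transpD[OF assms(1)] by (cases "depth G") auto
  show ?case
    by (rule Nest.prems(1)[of u]) (use u v \<open>R w u\<close> in auto)
qed

lemma GL_frame_loeb:
  assumes "GL_frame R" and "\<not> sat R V u (Box A)"
  obtains v where "R u v" and "\<not> sat R V v A" and "\<not> sat R V v (Dia (neg A))"
proof -
  from assms(1) have "wf {(y, x). R x y}"
    by (simp add: GL_frame_def)
  moreover from assms(2) obtain v0 where "v0 \<in> {v. R u v \<and> \<not> sat R V v A}"
    by auto
  ultimately obtain v where v: "R u v" "\<not> sat R V v A"
    and last: "\<And>y. R v y \<Longrightarrow> \<not> (R u y \<and> \<not> sat R V y A)"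
    by (rule wfE_min) auto
  have "\<not> sat R V v (Dia (neg A))"
    using v last assms(1) by (auto simp: GL_frame_def dest: transpD)
  with v show thesis
    by (rule that)
qed

theorem deriv_sound:
  assumes "deriv c G" and "GL_frame R"
  shows "\<not> falsifies R V w G"
proof -
  from assms(2) have tr: "transp R"
    by (simp add: GL_frame_def)
  show ?thesis
    using assms(1)
  proof (induction arbitrary: w)
    case (idR G a)
    show ?case
    proof
      assume "falsifies R V w (fill G {#F (NAtm a), F (Atm a)#})"
      then obtain u where "falsifies R V u {#F (NAtm a), F (Atm a)#}"
        by (rule falsifies_fill_focus[OF tr]) (rule that)
      then show False by simp
    qed
  next
    case (andR G A B)
    show ?case
    proof
      assume "falsifies R V w (fill G {#F (And A B)#})"
      then obtain u where u: "falsifies R V u {#F (And A B)#}"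
        "\<And>Y. falsifies R V u Y \<Longrightarrow> falsifies R V w (fill G Y)"
        by (rule falsifies_fill_focus[OF tr]) (rule that)
      from u(1) have "\<not> sat R V u A \<or> \<not> sat R V u B" by simp
      with andR.IH u(2)[of "{#F A#}"] u(2)[of "{#F B#}"] show False by auto
    qed
  next
    case (orR G A B)
    show ?case
    proof
      assume "falsifies R V w (fill G {#F (Or A B)#})"
      then obtain u where u: "falsifies R V u {#F (Or A B)#}"
        "\<And>Y. falsifies R V u Y \<Longrightarrow> falsifies R V w (fill G Y)"
        by (rule falsifies_fill_focus[OF tr]) (rule that)
      with orR.IH u(2)[of "{#F A, F B#}"] show False by auto
    qed
  next
    case (boxR G A)
    show ?case
    proof
      assume "falsifies R V w (fill G {#F (Box A)#})"
      then obtain u where u: "falsifies R V u {#F (Box A)#}"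
        "\<And>Y. falsifies R V u Y \<Longrightarrow> falsifies R V w (fill G Y)"
        by (rule falsifies_fill_focus[OF tr]) (rule that)
      from u(1) have "\<not> sat R V u (Box A)"
        by simp
      then obtain v where v: "R u v" "\<not> sat R V v A" "\<not> sat R V v (Dia (neg A))"
        by (rule GL_frame_loeb[OF assms(2)])
      with v have "falsifies R V u {#Br {#F (Dia (neg A)), F A#}#}" by auto
      with u(2) boxR.IH show False by blast
    qed
  next
    case (diaR D G A)
    show ?case
    proof
      assume "falsifies R V w (fill G (fill D {#} + {#F (Dia A)#}))"
      then obtain u where u: "falsifies R V u (fill D {#})" "\<not> sat R V u (Dia A)"
        "\<And>Y. falsifies R V u Y \<Longrightarrow> falsifies R V w (fill G Y)"
        by (rule falsifies_fill_focus[OF tr]) auto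
      obtain z where z: "\<And>Y. falsifies R V z Y \<Longrightarrow> falsifies R V u (fill D Y)" "R u z"
        using falsifies_fill_focus[OF tr u(1)] diaR.hyps by blast
      from z u(2) have "falsifies R V u (fill D {#F A#})" by auto
      with u(2) have "falsifies R V u (fill D {#F A#} + {#F (Dia A)#})" by simp
      with u(3) diaR.IH show False by blast
    qed
  next
    case (cutR G A)
    show ?case
    proof
      assume "falsifies R V w (fill G {#})"
      then obtain u where u: "\<And>Y. falsifies R V u Y \<Longrightarrow> falsifies R V w (fill G Y)"
        by (rule falsifies_fill_focus[OF tr]) (rule that)
      show False
      proof (cases "sat R V u A")
        case True
        then show False using u[of "{#F (neg A)#}"] cutR.IH(2) by auto
      next
        case False
        then show False using u[of "{#F A#}"] cutR.IH(1) by auto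
      qed
    qed
  qed
qed

section \<open>Zippers and derived rules\<close>

text \<open>A zipper lists the sequents enclosing a node, innermost first; \<open>plug\<close> rebuilds the
  whole sequent from it and the node.\<close>

fun plug :: "sequent list \<Rightarrow> sequent \<Rightarrow> sequent" where
  "plug [] N = N"
| "plug (E # Es) N = plug Es (E + {#Br N#})"

lemma plug_append [simp]: "plug (xs @ ys) N = plug ys (plug xs N)"
  by (induction xs arbitrary: N) auto

primrec ctx_add :: "sequent \<Rightarrow> ctx \<Rightarrow> ctx" where
  "ctx_add D (Hole E) = Hole (D + E)"
| "ctx_add D (Nest E G) = Nest (D + E) G"

primrec ctx_comp :: "ctx \<Rightarrow> ctx \<Rightarrow> ctx" where
  "ctx_comp (Hole D) H = ctx_add D H"
| "ctx_comp (Nest D G) H = Nest D (ctx_comp G H)"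

lemma fill_ctx_add [simp]: "fill (ctx_add D H) X = D + fill H X"
  by (cases H) (auto simp: ac_simps)

lemma fill_ctx_comp [simp]: "fill (ctx_comp G H) X = fill G (fill H X)"
  by (induction G) auto

fun zipper_ctx :: "sequent list \<Rightarrow> sequent \<Rightarrow> ctx" where
  "zipper_ctx [] M = Hole M"
| "zipper_ctx (E # Es) M = ctx_comp (zipper_ctx Es E) (Nest {#} (Hole M))"

lemma fill_zipper_ctx [simp]: "fill (zipper_ctx Es M) X = plug Es (M + X)"
  by (induction Es arbitrary: M X) auto

lemma deriv_identity: "deriv c (fill G {#F A, F (neg A)#})"
proof (induction A arbitrary: G)
  case (Atm a)
  show ?case using idR[of c G a] by (simp add: add_mset_commute)
next
  case (NAtm a)
  show ?case using idR[of c G a] by simp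
next
  case (And A B)
  have "deriv c (fill G {#F A, F (neg A), F (neg B)#})"
    using And.IH(1)[of "ctx_comp G (Hole {#F (neg B)#})"] by (simp add: add_mset_commute)
  moreover have "deriv c (fill G {#F B, F (neg A), F (neg B)#})"
    using And.IH(2)[of "ctx_comp G (Hole {#F (neg A)#})"] by (simp add: add_mset_commute)
  ultimately have "deriv c (fill (ctx_comp G (Hole {#F (neg A), F (neg B)#})) {#F (And A B)#})"
    by (intro andR) (simp_all add: add_mset_commute)
  then have "deriv c (fill (ctx_comp G (Hole {#F (And A B)#})) {#F (Or (neg A) (neg B))#})"
    by (intro orR) (simp add: add_mset_commute)
  then show ?case by (simp add: add_mset_commute)
next
  case (Or A B)
  have "deriv c (fill G {#F (neg A), F A, F B#})"
    using Or.IH(1)[of "ctx_comp G (Hole {#F B#})"] by (simp add: add_mset_commute)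
  moreover have "deriv c (fill G {#F (neg B), F A, F B#})"
    using Or.IH(2)[of "ctx_comp G (Hole {#F A#})"] by (simp add: add_mset_commute)
  ultimately have "deriv c (fill (ctx_comp G (Hole {#F A, F B#})) {#F (And (neg A) (neg B))#})"
    by (intro andR) (simp_all add: add_mset_commute)
  then have "deriv c (fill (ctx_comp G (Hole {#F (And (neg A) (neg B))#})) {#F (Or A B)#})"
    by (intro orR) (simp add: add_mset_commute)
  then show ?case by (simp add: add_mset_commute)
next
  case (Box A)
  let ?D = "Nest {#} (Hole {#F (Dia (neg A)), F A#})"
  have "deriv c (fill G (fill ?D {#F (neg A)#} + {#F (Dia (neg A))#}))"
    using Box.IH[of "ctx_comp G (Nest {#F (Dia (neg A))#} (Hole {#F (Dia (neg A))#}))"]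
    by (simp add: add_mset_commute)
  then have "deriv c (fill G (fill ?D {#} + {#F (Dia (neg A))#}))"
    by (rule diaR[rotated]) simp
  then have "deriv c (fill (ctx_comp G (Hole {#F (Dia (neg A))#})) {#F (Box A)#})"
    by (intro boxR) (simp add: add_mset_commute)
  then show ?case by (simp add: add_mset_commute)
next
  case (Dia A)
  let ?D = "Nest {#} (Hole {#F (Dia A), F (neg A)#})"
  have "deriv c (fill G (fill ?D {#F A#} + {#F (Dia A)#}))"
    using Dia.IH[of "ctx_comp G (Nest {#F (Dia A)#} (Hole {#F (Dia A)#}))"]
    by (simp add: add_mset_commute)
  then have "deriv c (fill G (fill ?D {#} + {#F (Dia A)#}))"
    by (rule diaR[rotated]) simp
  then have "deriv c (fill (ctx_comp G (Hole {#F (Dia A)#})) {#F (Box (neg A))#})"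
    by (intro boxR) (simp add: add_mset_commute)
  then show ?case by (simp add: add_mset_commute)
qed

lemma deriv_dia_ancestor:
  assumes "E \<in> set Es" and "F (Dia B) \<in># E" and "deriv c (plug Es (N + {#F B#}))"
  shows "deriv c (plug Es N)"
proof -
  obtain Es1 Es2 where Es: "Es = Es1 @ E # Es2"
    using assms(1) split_list by metis
  obtain E' where E: "E = add_mset (F (Dia B)) E'"
    using assms(2) by (metis multi_member_split)
  let ?D = "Nest {#} (zipper_ctx Es1 N)"
  have "deriv c (fill (zipper_ctx Es2 E') (fill ?D {#F B#} + {#F (Dia B)#}))"
    using assms(3) by (simp add: Es E add_mset_commute)
  then have "deriv c (fill (zipper_ctx Es2 E') (fill ?D {#} + {#F (Dia B)#}))"
    by (rule diaR[rotated]) simp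
  then show ?thesis by (simp add: Es E add_mset_commute)
qed

section \<open>Saturated sequents and their canonical countermodel\<close>

text \<open>\<open>covers N X\<close>: the node \<open>N\<close> contains enough of \<open>X\<close> for the canonical model to refute it.\<close>

primrec covers :: "sequent \<Rightarrow> fm \<Rightarrow> bool" where
  "covers N (Atm a) = (F (Atm a) \<in># N)"
| "covers N (NAtm a) = (F (NAtm a) \<in># N)"
| "covers N (And A B) = (F (And A B) \<in># N \<or> covers N A \<or> covers N B)"
| "covers N (Or A B) = (F (Or A B) \<in># N \<or> (covers N A \<and> covers N B))"
| "covers N (Box A) = (F (Box A) \<in># N \<or> (\<exists>D. Br D \<in># N \<and> covers D A))"
| "covers N (Dia A) = (F (Dia A) \<in># N)"

lemma covers_mem: "F X \<in># N \<Longrightarrow> covers N X"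
  by (cases X) auto

definition expanded :: "sequent \<Rightarrow> fm \<Rightarrow> bool" where
  "expanded N X = (case X of
      And A B \<Rightarrow> covers N A \<or> covers N B
    | Or A B \<Rightarrow> covers N A \<and> covers N B
    | Box A \<Rightarrow> (\<exists>D. Br D \<in># N \<and> covers D A)
    | _ \<Rightarrow> True)"

definition saturated_at :: "sequent list \<Rightarrow> sequent \<Rightarrow> bool" where
  "saturated_at Es N \<longleftrightarrow> (\<forall>X. F X \<in># N \<longrightarrow> expanded N X)
     \<and> (\<forall>a. \<not> (F (Atm a) \<in># N \<and> F (NAtm a) \<in># N))
     \<and> (\<forall>E B. E \<in> set Es \<longrightarrow> F (Dia B) \<in># E \<longrightarrow> covers N B)"

definition saturated :: "sequent \<Rightarrow> bool" where
  "saturated G \<longleftrightarrow> (\<forall>Es N. plug Es N = G \<longrightarrow> saturated_at Es N)"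

text \<open>The worlds of the canonical model are the nodes of a sequent, addressed by zippers; a node
  sees its strict descendants, and an atom is true where its negation occurs.\<close>

definition desc :: "sequent list \<times> sequent \<Rightarrow> sequent list \<times> sequent \<Rightarrow> bool" where
  "desc x y \<longleftrightarrow> (\<exists>Ds. Ds \<noteq> [] \<and> fst y = Ds @ fst x \<and> plug Ds (snd y) = snd x)"

definition canon_val :: "sequent list \<times> sequent \<Rightarrow> nat \<Rightarrow> bool" where
  "canon_val x a \<longleftrightarrow> F (NAtm a) \<in># snd x"

lemma desc_child: "Br D \<in># N \<Longrightarrow> desc (Es, N) ((N - {#Br D#}) # Es, D)"
  unfolding desc_def by (auto intro!: exI[of _ "[N - {#Br D#}]"])

lemma size_multiset_mem_less: "z \<in># D \<Longrightarrow> f z < size_multiset f D"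
  by (induction D) auto

lemma size_plug_less: "Ds \<noteq> [] \<Longrightarrow> size (Br N) < size (Br (plug Ds N))"
proof (induction Ds arbitrary: N)
  case (Cons E Ds)
  have "size (Br N) < size (Br (E + {#Br N#}))"
    using size_multiset_mem_less[of "Br N" "E + {#Br N#}" size] by simp
  with Cons show ?case
    by (cases "Ds = []") (auto dest: Cons.IH[of "E + {#Br N#}"])
qed simp

lemma GL_frame_desc: "GL_frame desc"
  unfolding GL_frame_def
proof
  show "transp desc"
    unfolding desc_def transp_def by (metis Nil_is_append_conv append_assoc plug_append)
  have "{(y, x). desc x y} \<subseteq> measure (\<lambda>x. size (Br (snd x)))"
    unfolding desc_def using size_plug_less by fastforce
  then show "wf {(y, x). desc x y}"
    using wf_subset by blast
qed

lemma plug_mem_ancestor: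
  "Ds \<noteq> [] \<Longrightarrow> plug Ds N' = N \<Longrightarrow> F X \<in># N \<Longrightarrow> \<exists>E\<in>set Ds. F X \<in># E"
proof (induction Ds arbitrary: N')
  case (Cons E Ds)
  then show ?case
    by (cases "Ds = []") (auto dest: Cons.IH[of "E + {#Br N'#}"])
qed simp

lemma canonical_truth:
  assumes "saturated G" and "plug Es N = G" and "covers N X"
  shows "\<not> sat desc canon_val (Es, N) X"
  using assms(2,3)
proof (induction X arbitrary: Es N)
  case (Atm a)
  then have "saturated_at Es N"
    using assms(1) saturated_def by blast
  with Atm show ?case
    by (auto simp: saturated_at_def canon_val_def)
next
  case (NAtm a)
  then show ?case by (auto simp: canon_val_def)
next
  case (And A B)
  then have "saturated_at Es N"
    using assms(1) saturated_def by blast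
  with And.prems have "covers N A \<or> covers N B"
    by (auto simp: saturated_at_def expanded_def)
  with And show ?case by auto
next
  case (Or A B)
  then have "saturated_at Es N"
    using assms(1) saturated_def by blast
  with Or.prems have "covers N A \<and> covers N B"
    by (auto simp: saturated_at_def expanded_def)
  with Or show ?case by auto
next
  case (Box A)
  then have "saturated_at Es N"
    using assms(1) saturated_def by blast
  then have "F (Box A) \<in># N \<Longrightarrow> expanded N (Box A)"
    by (simp add: saturated_at_def)
  with Box.prems obtain D where D: "Br D \<in># N" "covers D A"
    by (auto simp: expanded_def)
  have "plug ((N - {#Br D#}) # Es) D = G"
    using D(1) Box.prems(1) by simp
  with Box.IH D(2) have "\<not> sat desc canon_val ((N - {#Br D#}) # Es, D) A"
    by blast
  with desc_child[OF D(1)] show ?case by auto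
next
  case (Dia A)
  show ?case
  proof
    assume "sat desc canon_val (Es, N) (Dia A)"
    then obtain Es' N' where y: "desc (Es, N) (Es', N')" "sat desc canon_val (Es', N') A"
      by auto
    then obtain Ds where Ds: "Ds \<noteq> []" "Es' = Ds @ Es" "plug Ds N' = N"
      unfolding desc_def by auto
    have pl: "plug Es' N' = G"
      using Ds Dia.prems(1) by simp
    then have "saturated_at Es' N'"
      using assms(1) saturated_def by blast
    moreover obtain E where "E \<in> set Ds" "F (Dia A) \<in># E"
      using plug_mem_ancestor[OF Ds(1,3)] Dia.prems(2) by auto
    ultimately have "covers N' A"
      using Ds(2) by (auto simp: saturated_at_def)
    with Dia.IH[OF pl] y(2) show False by blast
  qed
qed

lemma saturated_falsified:
  assumes "saturated G" and "plug Es N = G"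
  shows "falsifies desc canon_val (Es, N) N"
  using assms(2)
proof (induction "size (Br N)" arbitrary: Es N rule: less_induct)
  case less
  show ?case
  proof (rule falsifies.intros)
    show "\<forall>A. F A \<in># N \<longrightarrow> \<not> sat desc canon_val (Es, N) A"
      using canonical_truth[OF assms(1) less.prems] covers_mem by blast
    show "\<forall>D. Br D \<in># N \<longrightarrow> (\<exists>v. desc (Es, N) v \<and> falsifies desc canon_val v D)"
    proof (intro allI impI)
      fix D
      assume D: "Br D \<in># N"
      have "size (Br D) < size (Br N)"
        using size_multiset_mem_less[OF D, of size] by simp
      moreover have "plug ((N - {#Br D#}) # Es) D = G"
        using D less.prems by simp
      ultimately have "falsifies desc canon_val ((N - {#Br D#}) # Es, D) D"
        by (rule less.hyps)
      with desc_child[OF D] show "\<exists>v. desc (Es, N) v \<and> falsifies desc canon_val v D"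
        by blast
    qed
  qed
qed

section \<open>An invariant of proof search\<close>

definition is_br :: "item \<Rightarrow> bool" where
  "is_br i = (case i of Br _ \<Rightarrow> True | F _ \<Rightarrow> False)"

lemma is_br_simps [simp]: "is_br (Br D)" "\<not> is_br (F A)"
  by (auto simp: is_br_def)

definition branches :: "sequent \<Rightarrow> nat" where
  "branches N = size (filter_mset is_br N)"

lemma branches_add [simp]:
  "branches (add_mset (Br D) N) = Suc (branches N)"
  "branches (add_mset (F A) N) = branches N"
  by (simp_all add: branches_def)

definition boxed :: "fm set \<Rightarrow> fm set" where
  "boxed Cl = {A. Box A \<in> Cl}"

lemma finite_boxed: "finite Cl \<Longrightarrow> finite (boxed Cl)"
proof -
  assume "finite Cl"
  then have "finite (Box -` Cl)"
    by (rule finite_vimageI) (simp add: inj_def)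
  moreover have "boxed Cl = Box -` Cl"
    by (auto simp: boxed_def)
  ultimately show ?thesis by simp
qed

text \<open>Below a node containing \<open>Dia (neg A)\<close>, a new child \<open>[Dia (neg A), A]\<close> for \<open>Box A\<close> would make
  the sequent derivable (\<open>deriv_box_blocked\<close>), so such \<open>A\<close> are blocked.\<close>

definition blocked :: "sequent \<Rightarrow> fm set" where
  "blocked N = {A. F (Dia (neg A)) \<in># N}"

lemma blocked_add [simp]:
  "blocked (add_mset (Br D) N) = blocked N"
  "blocked (add_mset (F X) N) = {A. X = Dia (neg A)} \<union> blocked N"
  by (auto simp: blocked_def)

definition box_covered :: "fm set \<Rightarrow> sequent \<Rightarrow> fm set" where
  "box_covered Cl N = {A \<in> boxed Cl. \<exists>D. Br D \<in># N \<and> covers D A}"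

lemma box_covered_add_F [simp]: "box_covered Cl (add_mset (F X) N) = box_covered Cl N"
  by (simp add: box_covered_def)

lemma finite_box_covered: "finite Cl \<Longrightarrow> finite (box_covered Cl N)"
  by (rule finite_subset[OF _ finite_boxed]) (auto simp: box_covered_def)

text \<open>Proof search adds a child to a node only for a box formula of \<open>Cl\<close> that is blocked
  neither on the branch \<open>U\<close> nor by the node itself and is covered by no sibling; the new child
  blocks it. Hence depth and branching exceed the initial bounds \<open>d0\<close> and \<open>b0\<close> by at most the
  number of box formulas of \<open>Cl\<close>.\<close>

inductive search_inv :: "fm set \<Rightarrow> nat \<Rightarrow> nat \<Rightarrow> nat \<Rightarrow> fm set \<Rightarrow> sequent \<Rightarrow> bool"
  for Cl d0 b0 where
  "(\<forall>X. F X \<in># N \<longrightarrow> X \<in> Cl) \<Longrightarrow> k \<le> d0 + card ((U \<union> blocked N) \<inter> boxed Cl)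
   \<Longrightarrow> branches N \<le> b0 + card (box_covered Cl N)
   \<Longrightarrow> (\<forall>D. Br D \<in># N \<longrightarrow> search_inv Cl d0 b0 (Suc k) (U \<union> blocked N) D)
   \<Longrightarrow> search_inv Cl d0 b0 k U N"

lemma search_inv_mono_blocked:
  assumes "finite Cl" and "search_inv Cl d0 b0 k U N" and "U \<subseteq> U'"
  shows "search_inv Cl d0 b0 k U' N"
  using assms(2,3)
proof (induction arbitrary: U' rule: search_inv.induct)
  case (1 N k U)
  have "card ((U \<union> blocked N) \<inter> boxed Cl) \<le> card ((U' \<union> blocked N) \<inter> boxed Cl)"
    using 1(5) by (intro card_mono) (auto simp: finite_boxed[OF assms(1)])
  moreover have "U \<union> blocked N \<subseteq> U' \<union> blocked N"
    using 1(5) by blast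
  ultimately show ?case
    using 1(1-4) by (intro search_inv.intros) auto
qed

fun blocked_along :: "fm set \<Rightarrow> sequent list \<Rightarrow> fm set" where
  "blocked_along U [] = U"
| "blocked_along U (E # Es) = blocked_along U Es \<union> blocked E"

lemma blocked_along_eq: "blocked_along U Es = U \<union> {A. \<exists>E\<in>set Es. F (Dia (neg A)) \<in># E}"
  by (induction Es) (auto simp: blocked_def)

lemma search_inv_plug:
  "search_inv Cl d0 b0 k U (plug Es N)
   \<Longrightarrow> search_inv Cl d0 b0 (k + length Es) (blocked_along U Es) N"
proof (induction Es arbitrary: N)
  case (Cons E Es)
  then have "search_inv Cl d0 b0 (k + length Es) (blocked_along U Es) (add_mset (Br N) E)"
    by simp
  then show ?case
    by (auto elim: search_inv.cases)
qed simp

lemma search_inv_ancestor_closed: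
  assumes "search_inv Cl d0 b0 k U (plug Es N)" and "E \<in> set Es" and "F X \<in># E"
  shows "X \<in> Cl"
proof -
  obtain Es1 Es2 where "Es = Es1 @ E # Es2"
    using assms(2) split_list by metis
  with assms(1) have "search_inv Cl d0 b0 k U (plug Es2 (E + {#Br (plug Es1 N)#}))"
    by simp
  then have "search_inv Cl d0 b0 (k + length Es2) (blocked_along U Es2) (E + {#Br (plug Es1 N)#})"
    by (rule search_inv_plug)
  with assms(3) show ?thesis
    by (auto elim: search_inv.cases)
qed

lemma covers_Br_mono:
  "(\<forall>X. covers N X \<longrightarrow> covers N' X) \<Longrightarrow> covers (add_mset (Br N) E) X
   \<Longrightarrow> covers (add_mset (Br N') E) X"
  by (induction X) auto

lemma covers_union: "covers N X \<Longrightarrow> covers (N + M) X"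
  by (induction X) auto

lemma covers_transfer:
  assumes "\<forall>Y. F Y \<in># N \<longrightarrow> covers N' Y" and "\<forall>D. Br D \<in># N \<longrightarrow> Br D \<in># N'"
  shows "covers N X \<Longrightarrow> covers N' X"
  by (induction X) (use assms in fastforce)+

lemma covers_replace_formula:
  assumes "covers (D + P) X"
  shows "\<forall>Y. covers (add_mset (F X) D) Y \<longrightarrow> covers (D + P) Y"
proof (intro allI impI)
  fix Y
  assume Y: "covers (add_mset (F X) D) Y"
  have fms: "\<forall>Z. F Z \<in># add_mset (F X) D \<longrightarrow> covers (D + P) Z"
    using assms covers_mem by auto
  have br: "\<forall>D'. Br D' \<in># add_mset (F X) D \<longrightarrow> Br D' \<in># D + P"
    by simp
  show "covers (D + P) Y"
    by (rule covers_transfer[OF fms br Y])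
qed

lemma box_covered_Br_mono:
  "(\<forall>X. covers N X \<longrightarrow> covers N' X)
   \<Longrightarrow> box_covered Cl (add_mset (Br N) E) \<subseteq> box_covered Cl (add_mset (Br N') E)"
  by (auto simp: box_covered_def)

lemma search_inv_replace_child:
  assumes "finite Cl" and inv: "search_inv Cl d0 b0 k U (add_mset (Br N) E)"
    and cov: "\<forall>X. covers N X \<longrightarrow> covers N' X"
    and child: "search_inv Cl d0 b0 (Suc k) (U \<union> blocked E) N
      \<Longrightarrow> search_inv Cl d0 b0 (Suc k) (U \<union> blocked E) N'"
  shows "search_inv Cl d0 b0 k U (add_mset (Br N') E)"
proof -
  from inv have fms: "\<forall>X. F X \<in># E \<longrightarrow> X \<in> Cl"
    and depth: "k \<le> d0 + card ((U \<union> blocked E) \<inter> boxed Cl)"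
    and br: "Suc (branches E) \<le> b0 + card (box_covered Cl (add_mset (Br N) E))"
    and N: "search_inv Cl d0 b0 (Suc k) (U \<union> blocked E) N"
    and E: "\<forall>D. Br D \<in># E \<longrightarrow> search_inv Cl d0 b0 (Suc k) (U \<union> blocked E) D"
    by (auto elim: search_inv.cases)
  have "card (box_covered Cl (add_mset (Br N) E)) \<le> card (box_covered Cl (add_mset (Br N') E))"
    by (rule card_mono[OF finite_box_covered[OF assms(1)] box_covered_Br_mono[OF cov]])
  with fms depth br child[OF N] E show ?thesis
    by (intro search_inv.intros) auto
qed

lemma search_inv_plug_replace:
  assumes "finite Cl" and "search_inv Cl d0 b0 k U (plug Es N)"
    and "\<forall>X. covers N X \<longrightarrow> covers N' X"
    and "search_inv Cl d0 b0 (k + length Es) (blocked_along U Es) N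
      \<Longrightarrow> search_inv Cl d0 b0 (k + length Es) (blocked_along U Es) N'"
  shows "search_inv Cl d0 b0 k U (plug Es N')"
  using assms(2-)
proof (induction Es arbitrary: N N')
  case (Cons E Es)
  have "search_inv Cl d0 b0 k U (plug Es (add_mset (Br N') E))"
  proof (rule Cons.IH)
    show "search_inv Cl d0 b0 k U (plug Es (add_mset (Br N) E))"
      using Cons.prems(1) by simp
    show "\<forall>X. covers (add_mset (Br N) E) X \<longrightarrow> covers (add_mset (Br N') E) X"
      using covers_Br_mono[OF Cons.prems(2)] by blast
    show "search_inv Cl d0 b0 (k + length Es) (blocked_along U Es) (add_mset (Br N') E)"
      if "search_inv Cl d0 b0 (k + length Es) (blocked_along U Es) (add_mset (Br N) E)"
      using search_inv_replace_child[OF assms(1) that Cons.prems(2)] Cons.prems(3) by simp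
  qed
  then show ?case by simp
qed simp

section \<open>A weight that proof search increases\<close>

function weight_item :: "fm set \<Rightarrow> item \<Rightarrow> nat" where
  "weight_item Cl (F A) = 0"
| "weight_item Cl (Br D) = Suc (card {X \<in> Cl. covers D X} + sum_mset (image_mset (weight_item Cl) D))"
  by pat_completeness auto
termination
  by (relation "measure (\<lambda>(Cl, i). size i)") (auto dest: size_multiset_mem_less[where f = size])

definition weight :: "fm set \<Rightarrow> sequent \<Rightarrow> nat" where
  "weight Cl N = card {X \<in> Cl. covers N X} + sum_mset (image_mset (weight_item Cl) N)"

lemma weight_item_Br [simp]: "weight_item Cl (Br D) = Suc (weight Cl D)"
  by (simp add: weight_def)

declare weight_item.simps(2) [simp del]

definition improves :: "fm set \<Rightarrow> sequent \<Rightarrow> sequent \<Rightarrow> bool" where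
  "improves Cl N N' \<longleftrightarrow> (\<forall>X. covers N X \<longrightarrow> covers N' X) \<and> weight Cl N < weight Cl N'"

lemma card_covers_mono:
  "finite Cl \<Longrightarrow> (\<forall>X. covers N X \<longrightarrow> covers N' X)
   \<Longrightarrow> card {X \<in> Cl. covers N X} \<le> card {X \<in> Cl. covers N' X}"
  by (rule card_mono) auto

lemma card_covers_strict_mono:
  "finite Cl \<Longrightarrow> (\<forall>X. covers N X \<longrightarrow> covers N' X) \<Longrightarrow> Y \<in> Cl \<Longrightarrow> \<not> covers N Y
   \<Longrightarrow> covers N' Y \<Longrightarrow> card {X \<in> Cl. covers N X} < card {X \<in> Cl. covers N' X}"
  by (rule psubset_card_mono) auto

lemma improves_plug: "finite Cl \<Longrightarrow> improves Cl N N' \<Longrightarrow> improves Cl (plug Es N) (plug Es N')"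
proof (induction Es arbitrary: N N')
  case (Cons E Es)
  then have cov: "\<forall>X. covers (add_mset (Br N) E) X \<longrightarrow> covers (add_mset (Br N') E) X"
    using covers_Br_mono by (auto simp: improves_def)
  moreover have "weight Cl (add_mset (Br N) E) < weight Cl (add_mset (Br N') E)"
    using card_covers_mono[OF Cons.prems(1) cov] Cons.prems(2)
    by (simp add: weight_def improves_def)
  ultimately show ?case
    using Cons.IH[OF Cons.prems(1)] by (simp add: improves_def)
qed simp

primrec weight_bound :: "nat \<Rightarrow> nat \<Rightarrow> nat \<Rightarrow> nat" where
  "weight_bound c b 0 = c"
| "weight_bound c b (Suc j) = c + b * Suc (weight_bound c b j)"

lemma sum_weight_item_le:
  "(\<forall>D. Br D \<in># N \<longrightarrow> weight Cl D < c) \<Longrightarrow> sum_mset (image_mset (weight_item Cl) N) \<le> branches N * c"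
proof (induction N)
  case (add x N)
  then show ?case by (cases x) auto
qed simp

lemma search_inv_weight_le:
  assumes "finite Cl" and "search_inv Cl d0 b0 k U N" and "d0 + card (boxed Cl) - k \<le> j"
  shows "weight Cl N \<le> weight_bound (card Cl) (b0 + card (boxed Cl)) j"
  using assms(2,3)
proof (induction j arbitrary: k U N)
  case 0
  have "\<not> Br D \<in># N" for D
  proof
    assume "Br D \<in># N"
    with "0.prems"(1) have "search_inv Cl d0 b0 (Suc k) (U \<union> blocked N) D"
      by (auto elim: search_inv.cases)
    then have "Suc k \<le> d0 + card ((U \<union> blocked N \<union> blocked D) \<inter> boxed Cl)"
      by (auto elim: search_inv.cases)
    moreover have "card ((U \<union> blocked N \<union> blocked D) \<inter> boxed Cl) \<le> card (boxed Cl)"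
      by (rule card_mono) (auto simp: finite_boxed[OF assms(1)])
    ultimately show False
      using "0.prems"(2) by linarith
  qed
  then have "sum_mset (image_mset (weight_item Cl) N) \<le> branches N * 0"
    by (intro sum_weight_item_le) auto
  moreover have "card {X \<in> Cl. covers N X} \<le> card Cl"
    using assms(1) by (rule card_mono) auto
  ultimately show ?case
    unfolding weight_def weight_bound.simps mult_0_right by linarith
next
  case (Suc j)
  let ?b = "b0 + card (boxed Cl)" and ?w = "weight_bound (card Cl) (b0 + card (boxed Cl)) j"
  have "weight Cl D < Suc ?w" if "Br D \<in># N" for D
  proof -
    from Suc.prems(1) that have "search_inv Cl d0 b0 (Suc k) (U \<union> blocked N) D"
      by (auto elim: search_inv.cases)
    with Suc.IH Suc.prems(2) show ?thesis
      by (simp add: le_imp_less_Suc)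
  qed
  then have "sum_mset (image_mset (weight_item Cl) N) \<le> branches N * Suc ?w"
    by (intro sum_weight_item_le) auto
  also have "\<dots> \<le> ?b * Suc ?w"
  proof -
    have "branches N \<le> b0 + card (box_covered Cl N)"
      using Suc.prems(1) by (auto elim: search_inv.cases)
    moreover have "card (box_covered Cl N) \<le> card (boxed Cl)"
      by (rule card_mono) (auto simp: box_covered_def finite_boxed[OF assms(1)])
    ultimately show ?thesis
      by (intro mult_le_mono1) linarith
  qed
  finally have "sum_mset (image_mset (weight_item Cl) N) \<le> ?b * Suc ?w" .
  moreover have "card {X \<in> Cl. covers N X} \<le> card Cl"
    using assms(1) by (rule card_mono) auto
  ultimately show ?case
    by (simp add: weight_def)
qed

lemma search_inv_replace_formulas:
  assumes fin: "finite Cl" and inv: "search_inv Cl d0 b0 k U N"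
    and fms: "\<forall>X. F X \<in># N' \<longrightarrow> X \<in> Cl" and blocked: "blocked N \<subseteq> blocked N'"
    and br: "filter_mset is_br N' = filter_mset is_br N"
  shows "search_inv Cl d0 b0 k U N'"
proof -
  have mem: "Br D \<in># N' \<longleftrightarrow> Br D \<in># N" for D
  proof -
    have "Br D \<in># filter_mset is_br N' \<longleftrightarrow> Br D \<in># filter_mset is_br N"
      using br by simp
    then show ?thesis by simp
  qed
  from inv have depth: "k \<le> d0 + card ((U \<union> blocked N) \<inter> boxed Cl)"
    and branching: "branches N \<le> b0 + card (box_covered Cl N)"
    and children: "\<forall>D. Br D \<in># N \<longrightarrow> search_inv Cl d0 b0 (Suc k) (U \<union> blocked N) D"
    by (auto elim: search_inv.cases)
  have "card ((U \<union> blocked N) \<inter> boxed Cl) \<le> card ((U \<union> blocked N') \<inter> boxed Cl)"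
    using blocked by (intro card_mono) (auto simp: finite_boxed[OF fin])
  moreover have "branches N' = branches N" and "box_covered Cl N' = box_covered Cl N"
    using br mem by (simp_all add: branches_def box_covered_def)
  moreover have "search_inv Cl d0 b0 (Suc k) (U \<union> blocked N') D" if "Br D \<in># N'" for D
  proof (rule search_inv_mono_blocked[OF fin])
    show "search_inv Cl d0 b0 (Suc k) (U \<union> blocked N) D"
      using children that mem by blast
    show "U \<union> blocked N \<subseteq> U \<union> blocked N'"
      using blocked by blast
  qed
  ultimately show ?thesis
    using fms depth branching by (intro search_inv.intros) auto
qed

lemma search_inv_expand_box:
  assumes fin: "finite Cl" and inv: "search_inv Cl d0 b0 k U (add_mset (F (Box A)) D)"
    and unblocked: "A \<notin> U \<union> blocked D" and uncovered: "\<not> (\<exists>D'. Br D' \<in># D \<and> covers D' A)"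
    and cl: "A \<in> Cl" "Dia (neg A) \<in> Cl"
  shows "search_inv Cl d0 b0 k U (add_mset (Br {#F (Dia (neg A)), F A#}) D)"
proof -
  let ?M = "{#F (Dia (neg A)), F A#}"
  from inv have fms: "\<forall>X. F X \<in># D \<longrightarrow> X \<in> Cl" and "Box A \<in> Cl"
    and depth: "k \<le> d0 + card ((U \<union> blocked D) \<inter> boxed Cl)"
    and branching: "branches D \<le> b0 + card (box_covered Cl D)"
    and children: "\<forall>D'. Br D' \<in># D \<longrightarrow> search_inv Cl d0 b0 (Suc k) (U \<union> blocked D) D'"
    by (auto elim: search_inv.cases)
  then have A: "A \<in> boxed Cl"
    by (simp add: boxed_def)
  have sub: "insert A (box_covered Cl D) \<subseteq> box_covered Cl (add_mset (Br ?M) D)"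
    using A covers_mem[of A ?M] by (auto simp: box_covered_def)
  have "A \<notin> box_covered Cl D"
    using uncovered by (simp add: box_covered_def)
  then have "Suc (card (box_covered Cl D)) = card (insert A (box_covered Cl D))"
    by (simp add: finite_box_covered[OF fin])
  also have "\<dots> \<le> card (box_covered Cl (add_mset (Br ?M) D))"
    by (rule card_mono[OF finite_box_covered[OF fin] sub])
  finally have "Suc (card (box_covered Cl D)) \<le> card (box_covered Cl (add_mset (Br ?M) D))" .
  with branching have branching': "branches (add_mset (Br ?M) D)
      \<le> b0 + card (box_covered Cl (add_mset (Br ?M) D))"
    by simp
  have sub: "insert A ((U \<union> blocked D) \<inter> boxed Cl) \<subseteq> (U \<union> blocked D \<union> blocked ?M) \<inter> boxed Cl"
    using A by (auto simp: blocked_def)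
  have "Suc (card ((U \<union> blocked D) \<inter> boxed Cl)) = card (insert A ((U \<union> blocked D) \<inter> boxed Cl))"
    using unblocked by (simp add: finite_boxed[OF fin])
  also have "\<dots> \<le> card ((U \<union> blocked D \<union> blocked ?M) \<inter> boxed Cl)"
    by (rule card_mono[OF _ sub]) (simp add: finite_boxed[OF fin])
  finally have "Suc (card ((U \<union> blocked D) \<inter> boxed Cl)) \<le> card ((U \<union> blocked D \<union> blocked ?M) \<inter> boxed Cl)" .
  with depth cl have "search_inv Cl d0 b0 (Suc k) (U \<union> blocked D) ?M"
    by (intro search_inv.intros) (auto simp: branches_def)
  with fms depth branching' children show ?thesis
    by (intro search_inv.intros) auto
qed

lemma deriv_box_blocked:
  assumes "A \<in> blocked_along {} Es \<union> blocked D"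
  shows "deriv c (plug Es (add_mset (Br {#F (Dia (neg A)), F A#}) D))"
proof -
  obtain E where E: "E \<in> set (D # Es)" "F (Dia (neg A)) \<in># E"
    using assms by (auto simp: blocked_along_eq blocked_def)
  have "deriv c (fill (zipper_ctx (D # Es) {#F (Dia (neg A))#}) {#F A, F (neg A)#})"
    by (rule deriv_identity)
  then have "deriv c (plug (D # Es) ({#F (Dia (neg A)), F A#} + {#F (neg A)#}))"
    by (simp add: add_mset_commute)
  then have "deriv c (plug (D # Es) {#F (Dia (neg A)), F A#})"
    by (rule deriv_dia_ancestor[OF E])
  then show ?thesis by simp
qed

definition subformula_closed :: "fm set \<Rightarrow> bool" where
  "subformula_closed Cl \<longleftrightarrow> (\<forall>A B. And A B \<in> Cl \<longrightarrow> A \<in> Cl \<and> B \<in> Cl)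
    \<and> (\<forall>A B. Or A B \<in> Cl \<longrightarrow> A \<in> Cl \<and> B \<in> Cl)
    \<and> (\<forall>A. Box A \<in> Cl \<longrightarrow> A \<in> Cl \<and> Dia (neg A) \<in> Cl) \<and> (\<forall>A. Dia A \<in> Cl \<longrightarrow> A \<in> Cl)"

lemma subformula_closedD:
  assumes "subformula_closed Cl"
  shows "And A B \<in> Cl \<Longrightarrow> A \<in> Cl" "And A B \<in> Cl \<Longrightarrow> B \<in> Cl"
    and "Or A B \<in> Cl \<Longrightarrow> A \<in> Cl" "Or A B \<in> Cl \<Longrightarrow> B \<in> Cl"
    and "Box A \<in> Cl \<Longrightarrow> A \<in> Cl" "Box A \<in> Cl \<Longrightarrow> Dia (neg A) \<in> Cl"
    and "Dia A \<in> Cl \<Longrightarrow> A \<in> Cl"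
  using assms unfolding subformula_closed_def by blast+

text \<open>In each search step below, \<open>N'\<close> is a premise of a rule applied backwards to the node \<open>N\<close> of
  \<open>plug Es N\<close>.\<close>

definition search_step :: "fm set \<Rightarrow> nat \<Rightarrow> nat \<Rightarrow> sequent list \<Rightarrow> sequent \<Rightarrow> sequent \<Rightarrow> bool" where
  "search_step Cl d0 b0 Es N N' \<longleftrightarrow> \<not> deriv False (plug Es N') \<and> improves Cl N N'
     \<and> search_inv Cl d0 b0 (length Es) (blocked_along {} Es) N'
     \<and> (\<forall>w. falsifies desc canon_val w N' \<longrightarrow> falsifies desc canon_val w N)"

context
  fixes Cl d0 b0 Es N
  assumes fin: "finite Cl" and closed: "subformula_closed Cl"
    and inv: "search_inv Cl d0 b0 0 {} (plug Es N)" and underivable: "\<not> deriv False (plug Es N)"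
begin

lemma search_inv_node: "search_inv Cl d0 b0 (length Es) (blocked_along {} Es) N"
  using search_inv_plug[OF inv] by simp

lemma node_fms_closed: "F X \<in># N \<Longrightarrow> X \<in> Cl"
  using search_inv_node by (auto elim: search_inv.cases)

lemma search_step_dia:
  assumes E: "E \<in> set Es" "F (Dia B) \<in># E" and uncovered: "\<not> covers N B"
  shows "\<exists>N'. search_step Cl d0 b0 Es N N'"
proof -
  let ?N' = "add_mset (F B) N"
  have "Dia B \<in> Cl"
    by (rule search_inv_ancestor_closed[OF inv E])
  then have B: "B \<in> Cl"
    by (rule subformula_closedD(7)[OF closed])
  have "\<not> deriv False (plug Es (N + {#F B#}))"
    using deriv_dia_ancestor[OF E] underivable by blast
  moreover have cov: "\<forall>X. covers N X \<longrightarrow> covers ?N' X"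
    using covers_union[of N _ "{#F B#}"] by simp
  moreover have "card {X \<in> Cl. covers N X} < card {X \<in> Cl. covers ?N' X}"
    by (rule card_covers_strict_mono[OF fin cov B uncovered]) (simp add: covers_mem)
  moreover have "search_inv Cl d0 b0 (length Es) (blocked_along {} Es) ?N'"
  proof (rule search_inv_replace_formulas[OF fin search_inv_node])
    show "\<forall>X. F X \<in># ?N' \<longrightarrow> X \<in> Cl"
      using node_fms_closed B by auto
  qed auto
  ultimately show ?thesis
    unfolding search_step_def improves_def weight_def by (intro exI[of _ ?N']) simp
qed

lemma search_step_and:
  assumes X: "F (And A B) \<in># N" and uncovered: "\<not> covers N A" "\<not> covers N B"
  shows "\<exists>N'. search_step Cl d0 b0 Es N N'"
proof -
  obtain D where N: "N = add_mset (F (And A B)) D"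
    using X by (metis multi_member_split)
  have "\<not> deriv False (plug Es (add_mset (F A) D)) \<or> \<not> deriv False (plug Es (add_mset (F B) D))"
    using andR[of False "zipper_ctx Es D" A B] underivable N by auto
  then obtain C where C: "C = A \<or> C = B" "\<not> deriv False (plug Es (add_mset (F C) D))"
    by blast
  let ?N' = "add_mset (F C) D"
  have "C \<in> Cl"
    using C(1) subformula_closedD(1,2)[OF closed node_fms_closed[OF X]] by blast
  have "covers (D + {#F C#}) (And A B)"
    using C(1) covers_mem[of C ?N'] by auto
  from covers_replace_formula[OF this] have cov: "\<forall>Y. covers N Y \<longrightarrow> covers ?N' Y"
    unfolding N by simp
  have "card {X \<in> Cl. covers N X} < card {X \<in> Cl. covers ?N' X}"
    using C(1) uncovered
    by (intro card_covers_strict_mono[OF fin cov \<open>C \<in> Cl\<close>]) (auto simp: covers_mem)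
  moreover have "search_inv Cl d0 b0 (length Es) (blocked_along {} Es) ?N'"
  proof (rule search_inv_replace_formulas[OF fin search_inv_node])
    show "\<forall>X. F X \<in># ?N' \<longrightarrow> X \<in> Cl"
      using node_fms_closed N \<open>C \<in> Cl\<close> by auto
    show "blocked N \<subseteq> blocked ?N'" "filter_mset is_br ?N' = filter_mset is_br N"
      unfolding N by auto
  qed
  moreover have "falsifies desc canon_val w N" if "falsifies desc canon_val w ?N'" for w
    using that C(1) N by auto
  ultimately show ?thesis
    using C(2) cov N unfolding search_step_def improves_def weight_def
    by (intro exI[of _ ?N']) simp
qed

lemma search_step_or:
  assumes X: "F (Or A B) \<in># N" and uncovered: "\<not> (covers N A \<and> covers N B)"
  shows "\<exists>N'. search_step Cl d0 b0 Es N N'"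
proof -
  obtain D where N: "N = add_mset (F (Or A B)) D"
    using X by (metis multi_member_split)
  let ?N' = "D + {#F A, F B#}"
  have underivable': "\<not> deriv False (plug Es ?N')"
  proof
    assume "deriv False (plug Es ?N')"
    then have "deriv False (fill (zipper_ctx Es D) {#F (Or A B)#})"
      by (intro orR) simp
    with underivable N show False by simp
  qed
  obtain C where C: "C = A \<or> C = B" "\<not> covers N C"
    using uncovered by blast
  have AB: "A \<in> Cl" "B \<in> Cl"
    using subformula_closedD(3,4)[OF closed node_fms_closed[OF X]] by auto
  have cover: "covers ?N' A" "covers ?N' B"
    by (simp_all add: covers_mem)
  then have "covers (D + {#F A, F B#}) (Or A B)"
    by simp
  from covers_replace_formula[OF this] have cov: "\<forall>Y. covers N Y \<longrightarrow> covers ?N' Y"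
    unfolding N .
  have "card {X \<in> Cl. covers N X} < card {X \<in> Cl. covers ?N' X}"
    by (rule card_covers_strict_mono[OF fin cov, of C]) (use C AB cover in auto)
  moreover have "search_inv Cl d0 b0 (length Es) (blocked_along {} Es) ?N'"
  proof (rule search_inv_replace_formulas[OF fin search_inv_node])
    show "\<forall>X. F X \<in># ?N' \<longrightarrow> X \<in> Cl"
      using node_fms_closed N AB by auto
    show "blocked N \<subseteq> blocked ?N'" "filter_mset is_br ?N' = filter_mset is_br N"
      unfolding N by auto
  qed
  moreover have "falsifies desc canon_val w N" if "falsifies desc canon_val w ?N'" for w
    using that N by auto
  ultimately show ?thesis
    using underivable' cov unfolding search_step_def improves_def weight_def
    by (intro exI[of _ ?N']) (simp add: N)
qed

lemma search_step_box:
  assumes X: "F (Box A) \<in># N" and uncovered: "\<not> (\<exists>D. Br D \<in># N \<and> covers D A)"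
  shows "\<exists>N'. search_step Cl d0 b0 Es N N'"
proof -
  obtain D where N: "N = add_mset (F (Box A)) D"
    using X by (metis multi_member_split)
  let ?M = "{#F (Dia (neg A)), F A#}"
  let ?N' = "add_mset (Br ?M) D"
  have "\<not> deriv False (plug Es ?N')"
    using boxR[of False "zipper_ctx Es D" A] underivable N by auto
  then have unblocked: "A \<notin> blocked_along {} Es \<union> blocked D"
    using deriv_box_blocked by blast
  have "covers (D + {#Br ?M#}) (Box A)"
    using covers_mem[of A ?M] by auto
  from covers_replace_formula[OF this] have cov: "\<forall>Y. covers N Y \<longrightarrow> covers ?N' Y"
    unfolding N by simp
  have "weight Cl N < weight Cl ?N'"
    using card_covers_mono[OF fin cov] N by (simp add: weight_def)
  moreover have "search_inv Cl d0 b0 (length Es) (blocked_along {} Es) ?N'"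
  proof (rule search_inv_expand_box[OF fin])
    show "search_inv Cl d0 b0 (length Es) (blocked_along {} Es) (add_mset (F (Box A)) D)"
      using search_inv_node N by simp
    show "A \<in> Cl" "Dia (neg A) \<in> Cl"
      using subformula_closedD(5,6)[OF closed node_fms_closed[OF X]] by auto
  qed (use unblocked uncovered N in auto)
  moreover have "falsifies desc canon_val w N" if "falsifies desc canon_val w ?N'" for w
    using that N by auto
  ultimately show ?thesis
    using \<open>\<not> deriv False (plug Es ?N')\<close> cov
    unfolding search_step_def improves_def by (intro exI[of _ ?N']) simp
qed

lemma search_step_exists:
  assumes "\<not> saturated_at Es N"
  shows "\<exists>N'. search_step Cl d0 b0 Es N N'"
proof -
  from assms consider (unexpanded) X where "F X \<in># N" "\<not> expanded N X"
    | (clash) a where "F (Atm a) \<in># N" "F (NAtm a) \<in># N"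
    | (dia) E B where "E \<in> set Es" "F (Dia B) \<in># E" "\<not> covers N B"
    unfolding saturated_at_def by blast
  then show ?thesis
  proof cases
    case unexpanded
    then show ?thesis
      by (cases X) (auto simp: expanded_def intro: search_step_and search_step_or search_step_box)
  next
    case clash
    then obtain N1 where N1: "N = add_mset (F (Atm a)) N1" "F (NAtm a) \<in># N1"
      by (metis insert_DiffM insert_noteq_member item.inject(1) fm.distinct(1))
    then obtain D where "N = add_mset (F (Atm a)) (add_mset (F (NAtm a)) D)"
      by (metis multi_member_split)
    with idR[of False "zipper_ctx Es D" a] underivable show ?thesis
      by (simp add: add_mset_commute)
  next
    case dia
    then show ?thesis
      by (rule search_step_dia)
  qed
qed

end

section \<open>Completeness of the cut-free calculus\<close>

lemma falsifies_plug_mono: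
  "(\<forall>w. falsifies R V w N' \<longrightarrow> falsifies R V w N) \<Longrightarrow> falsifies R V w (plug Es N')
   \<Longrightarrow> falsifies R V w (plug Es N)"
proof (induction Es arbitrary: N N' w)
  case (Cons E Es)
  have "\<forall>w. falsifies R V w (add_mset (Br N') E) \<longrightarrow> falsifies R V w (add_mset (Br N) E)"
    using Cons.prems(1) by auto
  with Cons.prems(2) show ?case
    using Cons.IH[of "add_mset (Br N') E" "add_mset (Br N) E"] by simp
qed simp

lemma underivable_falsified:
  assumes fin: "finite Cl" and closed: "subformula_closed Cl"
    and "search_inv Cl d0 b0 0 {} G" and "\<not> deriv False G"
  shows "\<exists>w. falsifies desc canon_val w G"
proof -
  define bound where "bound = weight_bound (card Cl) (b0 + card (boxed Cl)) (d0 + card (boxed Cl))"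
  show ?thesis
    using assms(3,4)
  proof (induction "bound - weight Cl G" arbitrary: G rule: less_induct)
    case less
    show ?case
    proof (cases "saturated G")
      case True
      then show ?thesis
        using saturated_falsified[of G "[]" G] by auto
    next
      case False
      then obtain Es N where G: "G = plug Es N" and unsaturated: "\<not> saturated_at Es N"
        unfolding saturated_def by blast
      obtain N' where "search_step Cl d0 b0 Es N N'"
        using search_step_exists[OF fin closed less.prems[unfolded G] unsaturated] by blast
      then have underivable': "\<not> deriv False (plug Es N')" and "improves Cl N N'"
        and inv': "search_inv Cl d0 b0 (length Es) (blocked_along {} Es) N'"
        and falsifies': "\<forall>w. falsifies desc canon_val w N' \<longrightarrow> falsifies desc canon_val w N"
        unfolding search_step_def by blast+
      have inv_plug: "search_inv Cl d0 b0 0 {} (plug Es N')"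
        using search_inv_plug_replace[OF fin] less.prems(1) \<open>improves Cl N N'\<close> inv' G
        by (simp add: improves_def)
      have "weight Cl G < weight Cl (plug Es N')"
        using improves_plug[OF fin \<open>improves Cl N N'\<close>] G by (simp add: improves_def)
      moreover have "weight Cl (plug Es N') \<le> bound"
        unfolding bound_def by (rule search_inv_weight_le[OF fin inv_plug]) simp
      ultimately have "bound - weight Cl (plug Es N') < bound - weight Cl G"
        by linarith
      from less.hyps[OF this inv_plug underivable'] obtain w
        where "falsifies desc canon_val w (plug Es N')" by blast
      then have "falsifies desc canon_val w (plug Es N)"
        by (rule falsifies_plug_mono[OF falsifies'])
      with G show ?thesis by blast
    qed
  qed
qed

function item_fms :: "item \<Rightarrow> fm set" where
  "item_fms (F A) = {A}"
| "item_fms (Br D) = (\<Union>i\<in>set_mset D. item_fms i)"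
  by pat_completeness auto
termination
  by (relation "measure size") (auto dest: size_multiset_mem_less[where f = size])

lemma finite_item_fms: "finite (item_fms i)"
  by (induction i rule: item_fms.induct) auto

lemma size_le_size_multiset: "size N \<le> size_multiset f N"
  by (induction N) auto

lemma search_inv_init:
  assumes "item_fms (Br N) \<subseteq> Cl" and "k + size (Br N) \<le> d0" and "size (Br N) \<le> b0"
  shows "search_inv Cl d0 b0 k U N"
  using assms
proof (induction "size (Br N)" arbitrary: k U N rule: less_induct)
  case less
  show ?case
  proof (rule search_inv.intros)
    show "\<forall>X. F X \<in># N \<longrightarrow> X \<in> Cl"
      using less.prems(1) by force
    show "k \<le> d0 + card ((U \<union> blocked N) \<inter> boxed Cl)"
      using less.prems(2) by simp
    have "branches N \<le> size N"
      unfolding branches_def by (rule size_filter_mset_lesseq)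
    also have "\<dots> \<le> size (Br N)"
      using size_le_size_multiset[of N size] by simp
    finally have "branches N \<le> size (Br N)" .
    then show "branches N \<le> b0 + card (box_covered Cl N)"
      using less.prems(3) by simp
    show "\<forall>D. Br D \<in># N \<longrightarrow> search_inv Cl d0 b0 (Suc k) (U \<union> blocked N) D"
    proof (intro allI impI)
      fix D
      assume D: "Br D \<in># N"
      then have "size (Br D) < size (Br N)"
        using size_multiset_mem_less[OF D, of size] by simp
      moreover have "item_fms (Br D) \<subseteq> Cl"
        using D less.prems(1) by force
      ultimately show "search_inv Cl d0 b0 (Suc k) (U \<union> blocked N) D"
        using less.hyps less.prems(2,3) by simp
    qed
  qed
qed

primrec subfms :: "fm \<Rightarrow> fm set" where
  "subfms (Atm a) = {Atm a}"
| "subfms (NAtm a) = {NAtm a}"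
| "subfms (And A B) = insert (And A B) (subfms A \<union> subfms B)"
| "subfms (Or A B) = insert (Or A B) (subfms A \<union> subfms B)"
| "subfms (Box A) = insert (Box A) (subfms A)"
| "subfms (Dia A) = insert (Dia A) (subfms A)"

lemma subfms_refl: "A \<in> subfms A"
  by (cases A) auto

lemma subfms_components:
  "And A B \<in> subfms Y \<Longrightarrow> A \<in> subfms Y \<and> B \<in> subfms Y"
  "Or A B \<in> subfms Y \<Longrightarrow> A \<in> subfms Y \<and> B \<in> subfms Y"
  "Box A \<in> subfms Y \<Longrightarrow> A \<in> subfms Y"
  "Dia A \<in> subfms Y \<Longrightarrow> A \<in> subfms Y"
  by (induction Y) (auto simp: subfms_refl)

definition neg_closure :: "fm set \<Rightarrow> fm set" where
  "neg_closure S = {X. \<exists>A\<in>S. X \<in> subfms A \<or> neg X \<in> subfms A}"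

lemma finite_neg_closure:
  assumes "finite S"
  shows "finite (neg_closure S)"
proof (rule finite_subset)
  show "neg_closure S \<subseteq> (\<Union>A\<in>S. subfms A) \<union> neg ` (\<Union>A\<in>S. subfms A)"
    unfolding neg_closure_def by (auto intro: image_eqI[where x = "neg _"])
  have "finite (subfms A)" for A
    by (induction A) auto
  with assms show "finite ((\<Union>A\<in>S. subfms A) \<union> neg ` (\<Union>A\<in>S. subfms A))"
    by blast
qed

lemma subformula_closed_neg_closure: "subformula_closed (neg_closure S)"
  unfolding subformula_closed_def neg_closure_def
  by (fastforce dest: subfms_components)

lemma subset_neg_closure: "S \<subseteq> neg_closure S"
  using subfms_refl by (auto simp: neg_closure_def)

theorem mainTheorem12:
  fixes \<Gamma> :: sequent
  assumes "derivable_with_cut \<Gamma>"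
  shows "derivable_cut_free \<Gamma>"
proof (rule ccontr)
  assume "\<not> derivable_cut_free \<Gamma>"
  let ?Cl = "neg_closure (item_fms (Br \<Gamma>))" and ?n = "size (Br \<Gamma>)"
  have "search_inv ?Cl ?n ?n 0 {} \<Gamma>"
    by (rule search_inv_init) (simp_all add: subset_neg_closure)
  then obtain w where "falsifies desc canon_val w \<Gamma>"
    using underivable_falsified[OF finite_neg_closure[OF finite_item_fms] subformula_closed_neg_closure]
      \<open>\<not> derivable_cut_free \<Gamma>\<close> by blast
  with deriv_sound[OF assms GL_frame_desc] show False
    by blast
qed

end
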